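(* Let $\gamma:J\to{\rm AdS}$ be a stationary curve of the LIEN flow, with evolution $(s,t)\mapsto A(t)\gamma(s+2\ell t)B(t)^{-1}$ for some $\ell\in\mathbb{R}$. Then its bending $\kappa$ satisfies $$\kappa'''+2\ell\kappa'-6\kappa\kappa'=0,$$ and the bending of its evolution is the traveling wave $\kappa(s+2\ell t)$, a solution of the KdV equation $\partial_t\kappa+\partial_s^3\kappa-6\kappa\partial_s\kappa=0$.
   Context: ${\rm AdS}={\rm SL}(2,\mathbb{R})$ with the metric induced by the polarization of $q(X)=-\det X$. Null curves are future-directed, without inflection points, parametrized by proper time ($\langle\gamma'',\gamma''\rangle=4$), with bending $\kappa=-\frac1{16}\langle\gamma''',\gamma'''\rangle$, $T=\gamma'/\sqrt2$, $B=\frac1{\sqrt2}\kappa\gamma'-\frac1{2\sqrt2}\gamma'''$. The LIEN flow is $\partial_t\gamma=-2\sqrt2(\kappa T+2B)$ for families $\gamma(s,t)$ of such curves. A null curve $\gamma$ is a stationary curve of the LIEN flow if its evolution by the flow (the solution with initial condition $\gamma$) is $(s,t)\mapsto A(t)\gamma(s+2\ell t)B(t)^{-1}$ for some $\ell\in\mathbb{R}$ and smooth $A,B:I\to{\rm SL}(2,\mathbb{R})$ with $A(0)=B(0)=I_2$. A prime denotes $d/ds$. *)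

theory Defs
  imports "HOL-Analysis.Analysis"
begin

text \<open>Anti-de Sitter 3-space AdS = SL(2,R), realised inside the 2x2 real matrices.\<close>

type_synonym mat2 = "real^2^2"

definition ads_ip :: "mat2 \<Rightarrow> mat2 \<Rightarrow> real" where
  "ads_ip X Y = - (det (X + Y) - det X - det Y) / 2"

text \<open>The timelike matrix J0 = [[0,-1],[1,0]] (q(J0) = -1) used for the time orientation:
  the left-invariant field X \<mapsto> X J0 is declared future-directed.\<close>
definition J0 :: mat2 where
  "J0 = vector [vector [0, -1], vector [1, 0]]"

fun vder :: "nat \<Rightarrow> (real \<Rightarrow> 'a::real_normed_vector) \<Rightarrow> real \<Rightarrow> 'a" where
  "vder 0 f = f"
| "vder (Suc n) f = (\<lambda>x. vector_derivative (vder n f) (at x))"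

definition Cinf_on :: "(real \<Rightarrow> 'a::real_normed_vector) \<Rightarrow> real set \<Rightarrow> bool" where
  "Cinf_on f S \<longleftrightarrow> (\<forall>n. \<forall>x\<in>S. vder n f differentiable (at x))"

text \<open>Future-directed, proper-time parametrized null curve without inflection points,
  defined on an open interval J.\<close>
definition null_curve :: "(real \<Rightarrow> mat2) \<Rightarrow> real set \<Rightarrow> bool" where
  "null_curve \<gamma> J \<longleftrightarrow> open J \<and> is_interval J \<and> J \<noteq> {} \<and> Cinf_on \<gamma> J \<and>
     (\<forall>s\<in>J. det (\<gamma> s) = 1
        \<and> vder 1 \<gamma> s \<noteq> 0
        \<and> ads_ip (vder 1 \<gamma> s) (vder 1 \<gamma> s) = 0
        \<and> ads_ip (vder 1 \<gamma> s) (\<gamma> s ** J0) < 0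
        \<and> ads_ip (vder 2 \<gamma> s) (vder 2 \<gamma> s) = 4)"

definition bending :: "(real \<Rightarrow> mat2) \<Rightarrow> real \<Rightarrow> real" where
  "bending \<gamma> s = - (1/16) * ads_ip (vder 3 \<gamma> s) (vder 3 \<gamma> s)"

definition frameT :: "(real \<Rightarrow> mat2) \<Rightarrow> real \<Rightarrow> mat2" where
  "frameT \<gamma> s = (1 / sqrt 2) *\<^sub>R vder 1 \<gamma> s"

definition frameB :: "(real \<Rightarrow> mat2) \<Rightarrow> real \<Rightarrow> mat2" where
  "frameB \<gamma> s = (bending \<gamma> s / sqrt 2) *\<^sub>R vder 1 \<gamma> s - (1 / (2 * sqrt 2)) *\<^sub>R vder 3 \<gamma> s"

definition lien_flow :: "(real \<Rightarrow> real \<Rightarrow> mat2) \<Rightarrow> (real \<times> real) set \<Rightarrow> bool" where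
  "lien_flow G D \<longleftrightarrow> open D \<and>
     (\<forall>t. {s. (s, t) \<in> D} \<noteq> {} \<longrightarrow> null_curve (\<lambda>s. G s t) {s. (s, t) \<in> D}) \<and>
     (\<forall>(s, t)\<in>D. ((\<lambda>\<tau>. G s \<tau>) has_vector_derivative
         (- 2 * sqrt 2) *\<^sub>R (bending (\<lambda>\<sigma>. G \<sigma> t) s *\<^sub>R frameT (\<lambda>\<sigma>. G \<sigma> t) s
                            + 2 *\<^sub>R frameB (\<lambda>\<sigma>. G \<sigma> t) s)) (at t))"

definition stat_evol :: "(real \<Rightarrow> mat2) \<Rightarrow> real \<Rightarrow> (real \<Rightarrow> mat2) \<Rightarrow> (real \<Rightarrow> mat2) \<Rightarrow> real \<Rightarrow> real \<Rightarrow> mat2" where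
  "stat_evol \<gamma> l A B = (\<lambda>s t. A t ** \<gamma> (s + 2 * l * t) ** matrix_inv (B t))"

definition evol_dom :: "real set \<Rightarrow> real \<Rightarrow> real set \<Rightarrow> (real \<times> real) set" where
  "evol_dom J l I = {(s, t). t \<in> I \<and> s + 2 * l * t \<in> J}"

definition stationary_LIEN :: "(real \<Rightarrow> mat2) \<Rightarrow> real set \<Rightarrow> real \<Rightarrow> (real \<Rightarrow> mat2) \<Rightarrow> (real \<Rightarrow> mat2) \<Rightarrow> real set \<Rightarrow> bool" where
  "stationary_LIEN \<gamma> J l A B I \<longleftrightarrow>
     open I \<and> is_interval I \<and> 0 \<in> I \<and>
     Cinf_on A I \<and> Cinf_on B I \<and> (\<forall>t\<in>I. det (A t) = 1 \<and> det (B t) = 1) \<and>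
     A 0 = mat 1 \<and> B 0 = mat 1 \<and>
     lien_flow (stat_evol \<gamma> l A B) (evol_dom J l I)"

end

theory Submission
  imports Defs
begin

text \<open>Differentiating the stationary evolution A(t) \<gamma>(s + 2 l t) B(t)^-1 at t = 0 shows that
  2\<gamma>''' - (6\<kappa> + 2l)\<gamma>', the LIEN velocity corrected by the drift along \<gamma>, equals a\<gamma> - \<gamma>b with
  a, b trace-free, i.e. it is the restriction of a Killing field of AdS. Killing fields commute
  with d/ds and are skew for the form. The normalizations of a null curve fix the Gram matrix
  of the frame \<gamma>, \<gamma>', \<gamma>'', \<gamma>''' and yield \<gamma>'''' = -4\<gamma> + 2\<kappa>'\<gamma>' + 4\<kappa>\<gamma>''; expanding
  the third derivative of the Killing field in this frame, its skewness against \<gamma>''' is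
  precisely \<kappa>''' + 2l\<kappa>' - 6\<kappa>\<kappa>' = 0. The bending is invariant under SL(2,R) x SL(2,R) and
  translations of the parameter, so the evolution has bending \<kappa>(s + 2lt), which solves KdV
  by the chain rule.\<close>

lemma ads_ip_eq:
  "ads_ip X Y = - (X$1$1 * Y$2$2 + Y$1$1 * X$2$2 - X$1$2 * Y$2$1 - Y$1$2 * X$2$1) / 2"
  unfolding ads_ip_def det_2 by (simp add: algebra_simps)

lemma ads_ip_commute: "ads_ip X Y = ads_ip Y X"
  unfolding ads_ip_eq by (simp add: algebra_simps)

lemma ads_ip_self: "ads_ip X X = - det X"
  unfolding ads_ip_eq det_2 by (simp add: field_simps)

lemma bounded_bilinear_ads_ip: "bounded_bilinear ads_ip"
proof -
  have "bilinear ads_ip"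
    unfolding bilinear_def by (auto intro!: linearI simp: ads_ip_eq field_simps)
  then show ?thesis by (simp add: bilinear_conv_bounded_bilinear)
qed

lemma bounded_bilinear_matrix_matrix_mult:
  "bounded_bilinear ((**) :: real^'n^'m \<Rightarrow> real^'p^'n \<Rightarrow> real^'p^'m)"
proof -
  have "bilinear ((**) :: real^'n^'m \<Rightarrow> real^'p^'n \<Rightarrow> real^'p^'m)"
    unfolding bilinear_def
    by (auto intro!: linearI simp: matrix_matrix_mult_def vec_eq_iff sum.distrib
        sum_distrib_left algebra_simps)
  then show ?thesis by (simp add: bilinear_conv_bounded_bilinear)
qed

lemma trace_2: "trace (a :: mat2) = a$1$1 + a$2$2"
  by (simp add: trace_def sum_2)

lemma ads_ip_Killing_self:
  fixes a b X :: mat2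
  assumes "trace a = 0" "trace b = 0"
  shows "ads_ip (a ** X - X ** b) X = 0"
proof -
  have a: "a$1$1 = - a$2$2" and b: "b$1$1 = - b$2$2" using assms by (simp_all add: trace_2)
  show ?thesis unfolding ads_ip_eq by (simp add: matrix_matrix_mult_def sum_2 a b algebra_simps)
qed

lemma ads_ip_nondegenerate:
  fixes X :: mat2
  assumes "\<And>Y. ads_ip X Y = 0"
  shows "X = 0"
proof -
  let ?Y = "vector [vector [X$2$2, - X$2$1], vector [- X$1$2, X$1$1]] :: mat2"
  have "ads_ip X ?Y = 0" by (rule assms)
  then have "(X$1$1)\<^sup>2 + (X$2$2)\<^sup>2 + (X$1$2)\<^sup>2 + (X$2$1)\<^sup>2 = 0"
    by (simp add: ads_ip_eq power2_eq_square algebra_simps)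
  then have "X$1$1 = 0 \<and> X$2$2 = 0 \<and> X$1$2 = 0 \<and> X$2$1 = 0"
    by (smt (verit) zero_le_power2 zero_eq_power2)
  then show ?thesis by (simp add: vec_eq_iff forall_2)
qed

lemma span_ads_ip_null_frame:
  fixes e0 e1 e2 e3 :: mat2
  assumes "ads_ip e0 e0 = -1" "ads_ip e0 e1 = 0" "ads_ip e0 e2 = 0" "ads_ip e0 e3 = 0"
    "ads_ip e1 e1 = 0" "ads_ip e1 e2 = 0" "ads_ip e1 e3 = -4" "ads_ip e2 e2 = 4" "ads_ip e2 e3 = 0"
  shows "span {e0, e1, e2, e3} = UNIV"
proof -
  interpret ip: bounded_bilinear ads_ip by (rule bounded_bilinear_ads_ip)
  note g = assms assms[THEN trans[OF ads_ip_commute]]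
  have distinct: "e0 \<noteq> e1" "e0 \<noteq> e2" "e0 \<noteq> e3" "e1 \<noteq> e2" "e1 \<noteq> e3" "e2 \<noteq> e3"
    using g by auto
  let ?B = "{e0, e1, e2, e3}"
  have "independent ?B"
  proof
    assume "dependent ?B"
    then obtain u where u: "\<exists>v\<in>?B. u v \<noteq> 0" and "(\<Sum>v\<in>?B. u v *\<^sub>R v) = 0"
      using dependent_finite[of ?B] by auto
    then have w: "u e0 *\<^sub>R e0 + u e1 *\<^sub>R e1 + u e2 *\<^sub>R e2 + u e3 *\<^sub>R e3 = 0"
      using distinct by (simp add: add.assoc)
    have "ads_ip (u e0 *\<^sub>R e0 + u e1 *\<^sub>R e1 + u e2 *\<^sub>R e2 + u e3 *\<^sub>R e3) e = 0" for e
      unfolding w by (rule ip.zero_left)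
    from this[of e0] this[of e1] this[of e2] this[of e3]
    have "u e0 = 0" "u e3 = 0" "u e2 = 0" "u e1 = 0"
      by (simp_all add: ip.add_left ip.scaleR_left g)
    then show False using u by auto
  qed
  moreover have "card ?B = dim (UNIV :: mat2 set)" using distinct by simp
  ultimately show ?thesis using card_eq_dim[of ?B UNIV] span_subspace[of ?B UNIV] by auto
qed

lemma eq_0_if_ads_ip_null_frame_eq_0:
  fixes e0 e1 e2 e3 X :: mat2
  assumes "ads_ip e0 e0 = -1" "ads_ip e0 e1 = 0" "ads_ip e0 e2 = 0" "ads_ip e0 e3 = 0"
    "ads_ip e1 e1 = 0" "ads_ip e1 e2 = 0" "ads_ip e1 e3 = -4" "ads_ip e2 e2 = 4" "ads_ip e2 e3 = 0"
    and "ads_ip X e0 = 0" "ads_ip X e1 = 0" "ads_ip X e2 = 0" "ads_ip X e3 = 0"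
  shows "X = 0"
proof (rule ads_ip_nondegenerate)
  fix Y
  have "linear (ads_ip X)"
    using bounded_bilinear.bounded_linear_right[OF bounded_bilinear_ads_ip]
    by (rule bounded_linear.linear)
  then show "ads_ip X Y = 0"
    using linear_eq_0_on_span[of "ads_ip X" "{e0, e1, e2, e3}" Y]
      span_ads_ip_null_frame[OF assms(1-9)] assms(10-) by auto
qed

lemma has_vector_derivative_vder:
  "Cinf_on f S \<Longrightarrow> s \<in> S \<Longrightarrow> (vder n f has_vector_derivative vder (Suc n) f s) (at s)"
  unfolding Cinf_on_def by (simp add: vector_derivative_works[symmetric])

lemma has_real_derivative_ads_ip:
  assumes "(f has_vector_derivative f') (at s)" "(g has_vector_derivative g') (at s)"
  shows "((\<lambda>x. ads_ip (f x) (g x)) has_real_derivative ads_ip f' (g s) + ads_ip (f s) g') (at s)"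
  using bounded_bilinear.has_vector_derivative[OF bounded_bilinear_ads_ip assms]
  unfolding has_real_derivative_iff_has_vector_derivative by (simp add: add.commute)

lemma has_vector_derivative_unique_on_open:
  assumes "open S" "s \<in> S" "\<And>x. x \<in> S \<Longrightarrow> f x = g x"
    "(f has_vector_derivative a) (at s)" "(g has_vector_derivative b) (at s)"
  shows "a = b"
  using has_vector_derivative_transform_within_open[OF assms(4,1,2)] assms(3,5)
    vector_derivative_unique_at by blast

lemma has_real_derivative_const_on_open_eq_0:
  fixes f :: "real \<Rightarrow> real"
  assumes "open S" "s \<in> S" "\<And>x. x \<in> S \<Longrightarrow> f x = c" "(f has_real_derivative d) (at s)"
  shows "d = 0"
  using has_vector_derivative_unique_on_open[OF assms(1-3), where b = 0] assms(4)
  unfolding has_real_derivative_iff_has_vector_derivative by simp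

text \<open>Successive differentiation of the normalizations det \<gamma> = 1, \<langle>\<gamma>',\<gamma>'\<rangle> = 0 and
  \<langle>\<gamma>'',\<gamma>''\<rangle> = 4.\<close>
lemma null_curve_gram:
  assumes nc: "null_curve \<gamma> J" and s: "s \<in> J"
  defines "g \<equiv> \<lambda>i j. ads_ip (vder i \<gamma> s) (vder j \<gamma> s)"
  shows "g 0 0 = -1" "g 0 1 = 0" "g 0 2 = 0" "g 0 3 = 0" "g 1 1 = 0" "g 1 2 = 0"
    "g 1 3 = -4" "g 2 2 = 4" "g 2 3 = 0" "g 0 4 = 4" "g 1 4 = 0" "g 2 4 = - g 3 3"
proof -
  have oJ: "open J" and ci: "Cinf_on \<gamma> J" using nc unfolding null_curve_def by auto
  have pt: "\<And>x. x \<in> J \<Longrightarrow> det (\<gamma> x) = 1 \<and> ads_ip (vder 1 \<gamma> x) (vder 1 \<gamma> x) = 0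
      \<and> ads_ip (vder 2 \<gamma> x) (vder 2 \<gamma> x) = 4" using nc unfolding null_curve_def by auto
  define G where "G = (\<lambda>i j x. ads_ip (vder i \<gamma> x) (vder j \<gamma> x))"
  have dG: "(G i j has_real_derivative G (Suc i) j x + G i (Suc j) x) (at x)" if "x \<in> J" for i j x
    unfolding G_def using has_real_derivative_ads_ip[OF has_vector_derivative_vder[OF ci that]
        has_vector_derivative_vder[OF ci that]] by simp
  have Gsym: "G i j x = G j i x" for i j x unfolding G_def using ads_ip_commute by blast
  have const: "G (Suc i) j x + G i (Suc j) x = 0"
    if "\<And>x. x \<in> J \<Longrightarrow> G i j x = c" "x \<in> J" for i j c x
    using has_real_derivative_const_on_open_eq_0[OF oJ that(2,1) dG[OF that(2)]] .
  have G00: "G 0 0 x = -1" if "x \<in> J" for x unfolding G_def using pt[OF that] by (simp add: ads_ip_self)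
  have G11: "G 1 1 x = 0" if "x \<in> J" for x unfolding G_def using pt[OF that] by simp
  have G22: "G 2 2 x = 4" if "x \<in> J" for x unfolding G_def using pt[OF that] by simp
  have G01: "G 0 1 x = 0" if "x \<in> J" for x using const[OF G00 that] Gsym[of 1 0] by simp
  have G12: "G 1 2 x = 0" if "x \<in> J" for x
    using const[OF G11 that] Gsym[of 2 1] by (simp add: numeral_2_eq_2)
  have G23: "G 2 3 x = 0" if "x \<in> J" for x
    using const[OF G22 that] Gsym[of 3 2] by (simp add: eval_nat_numeral)
  have G02: "G 0 2 x = 0" if "x \<in> J" for x
    using const[OF G01 that] G11[OF that] by (simp add: numeral_2_eq_2)
  have G03: "G 0 3 x = 0" if "x \<in> J" for x
    using const[OF G02 that] G12[OF that] by (simp add: eval_nat_numeral)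
  have G13: "G 1 3 x = -4" if "x \<in> J" for x
    using const[OF G12 that] G22[OF that] by (simp add: eval_nat_numeral)
  have "G 0 4 s = 4" "G 1 4 s = 0" "G 2 4 s = - G 3 3 s"
    using const[OF G03 s] G13[OF s] const[OF G13 s] G23[OF s] const[OF G23 s]
    by (simp_all add: eval_nat_numeral)
  then show "g 0 0 = -1" "g 0 1 = 0" "g 0 2 = 0" "g 0 3 = 0" "g 1 1 = 0" "g 1 2 = 0"
    "g 1 3 = -4" "g 2 2 = 4" "g 2 3 = 0" "g 0 4 = 4" "g 1 4 = 0" "g 2 4 = - g 3 3"
    using G00[OF s] G01[OF s] G02[OF s] G03[OF s] G11[OF s] G12[OF s] G13[OF s] G22[OF s] G23[OF s]
    unfolding g_def G_def by simp_all
qed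

lemma has_real_derivative_bending:
  assumes "null_curve \<gamma> J" "s \<in> J"
  shows "(bending \<gamma> has_real_derivative - (1/8) * ads_ip (vder 3 \<gamma> s) (vder 4 \<gamma> s)) (at s)"
proof -
  have "Cinf_on \<gamma> J" using assms(1) unfolding null_curve_def by auto
  moreover have "Suc 3 = 4" by simp
  ultimately have d: "(vder 3 \<gamma> has_vector_derivative vder 4 \<gamma> s) (at s)"
    using has_vector_derivative_vder[OF _ assms(2), of \<gamma> 3] by metis
  have "((\<lambda>x. ads_ip (vder 3 \<gamma> x) (vder 3 \<gamma> x)) has_real_derivative
      2 * ads_ip (vder 3 \<gamma> s) (vder 4 \<gamma> s)) (at s)"
    using has_real_derivative_ads_ip[OF d d] ads_ip_commute[of "vder 4 \<gamma> s" "vder 3 \<gamma> s"]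
    by (simp only: mult_2)
  from DERIV_cmult[OF this, of "- (1/16)"] show ?thesis
    unfolding bending_def by simp
qed

lemma has_real_derivative_higher_deriv_bending:
  assumes nc: "null_curve \<gamma> J" and s: "s \<in> J"
  shows "(bending \<gamma> has_real_derivative deriv (bending \<gamma>) s) (at s)"
    and "(deriv (bending \<gamma>) has_real_derivative deriv (deriv (bending \<gamma>)) s) (at s)"
    and "(deriv (deriv (bending \<gamma>)) has_real_derivative (deriv ^^ 3) (bending \<gamma>) s) (at s)"
proof -
  have oJ: "open J" and ci: "Cinf_on \<gamma> J" using nc unfolding null_curve_def by auto
  define G where "G = (\<lambda>i j x. ads_ip (vder i \<gamma> x) (vder j \<gamma> x))"
  have dG: "(G i j has_real_derivative G (Suc i) j x + G i (Suc j) x) (at x)" if "x \<in> J" for i j x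
    unfolding G_def using has_real_derivative_ads_ip[OF has_vector_derivative_vder[OF ci that]
        has_vector_derivative_vder[OF ci that]] by simp
  define k1 where "k1 = (\<lambda>x. - (1/8) * G 3 4 x)"
  define k2 where "k2 = (\<lambda>x. - (1/8) * (G 4 4 x + G 3 5 x))"
  define k3 where "k3 = (\<lambda>x. - (1/8) * (G 5 4 x + G 4 5 x + (G 4 5 x + G 3 6 x)))"
  have d1: "(bending \<gamma> has_real_derivative k1 x) (at x)" if "x \<in> J" for x
    using has_real_derivative_bending[OF nc that] unfolding k1_def G_def .
  have d2: "(k1 has_real_derivative k2 x) (at x)" if "x \<in> J" for x
    using DERIV_cmult[OF dG[OF that, of 3 4], of "- (1/8)"]
    unfolding k1_def k2_def by (simp add: eval_nat_numeral)
  have d3: "(k2 has_real_derivative k3 x) (at x)" if "x \<in> J" for x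
    using DERIV_cmult[OF DERIV_add[OF dG[OF that, of 4 4] dG[OF that, of 3 5]], of "- (1/8)"]
    unfolding k2_def k3_def by (simp add: eval_nat_numeral)
  have e1: "deriv (bending \<gamma>) x = k1 x" if "x \<in> J" for x
    using DERIV_imp_deriv[OF d1[OF that]] .
  have d2': "(deriv (bending \<gamma>) has_real_derivative k2 x) (at x)" if "x \<in> J" for x
    using has_field_derivative_transform_within_open[OF d2[OF that] oJ that] e1 by simp
  have d3': "(deriv (deriv (bending \<gamma>)) has_real_derivative k3 x) (at x)" if "x \<in> J" for x
    using has_field_derivative_transform_within_open[OF d3[OF that] oJ that]
      DERIV_imp_deriv[OF d2'] by simp
  show "(bending \<gamma> has_real_derivative deriv (bending \<gamma>) s) (at s)"
    and "(deriv (bending \<gamma>) has_real_derivative deriv (deriv (bending \<gamma>)) s) (at s)"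
    and "(deriv (deriv (bending \<gamma>)) has_real_derivative (deriv ^^ 3) (bending \<gamma>) s) (at s)"
    using d1[OF s] d2'[OF s] d3'[OF s] DERIV_imp_deriv[OF d1[OF s]] DERIV_imp_deriv[OF d2'[OF s]]
      DERIV_imp_deriv[OF d3'[OF s]]
    by (simp_all add: numeral_3_eq_3)
qed

text \<open>Frenet equation: the coefficients are read off from the Gram matrix of the frame
  \<gamma>, \<gamma>', \<gamma>'', \<gamma>'''.\<close>
lemma null_curve_vder4:
  assumes nc: "null_curve \<gamma> J" and s: "s \<in> J"
  shows "vder 4 \<gamma> s = (-4) *\<^sub>R \<gamma> s + (2 * deriv (bending \<gamma>) s) *\<^sub>R vder 1 \<gamma> s
                       + (4 * bending \<gamma> s) *\<^sub>R vder 2 \<gamma> s"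
proof -
  interpret ip: bounded_bilinear ads_ip by (rule bounded_bilinear_ads_ip)
  note g = null_curve_gram[OF nc s]
  have dk: "deriv (bending \<gamma>) s = - (1/8) * ads_ip (vder 3 \<gamma> s) (vder 4 \<gamma> s)"
    using DERIV_imp_deriv[OF has_real_derivative_bending[OF nc s]] .
  have k: "bending \<gamma> s = - (1/16) * ads_ip (vder 3 \<gamma> s) (vder 3 \<gamma> s)"
    unfolding bending_def ..
  have sym: "ads_ip (vder j \<gamma> s) (vder i \<gamma> s) = ads_ip (vder i \<gamma> s) (vder j \<gamma> s)" for i j
    by (rule ads_ip_commute)
  let ?X = "vder 4 \<gamma> s - ((-4) *\<^sub>R vder 0 \<gamma> s + (2 * deriv (bending \<gamma>) s) *\<^sub>R vder 1 \<gamma> s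
                                          + (4 * bending \<gamma> s) *\<^sub>R vder 2 \<gamma> s)"
  have "?X = 0"
  proof (rule eq_0_if_ads_ip_null_frame_eq_0[of "vder 0 \<gamma> s" "vder 1 \<gamma> s" "vder 2 \<gamma> s" "vder 3 \<gamma> s"])
    show "ads_ip ?X (vder 0 \<gamma> s) = 0" "ads_ip ?X (vder 1 \<gamma> s) = 0"
      "ads_ip ?X (vder 2 \<gamma> s) = 0" "ads_ip ?X (vder 3 \<gamma> s) = 0"
      unfolding ip.diff_left ip.add_left ip.scaleR_left
      using g sym[of 0 1] sym[of 0 2] sym[of 1 2] sym[of 0 3] sym[of 1 3] sym[of 2 3]
        sym[of 0 4] sym[of 1 4] sym[of 2 4] sym[of 3 4]
      by (simp_all add: dk k)
  qed (use g in simp_all)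
  then show ?thesis by simp
qed

lemma bounded_linear_Killing: "bounded_linear (\<lambda>X :: mat2. a ** X - X ** b)"
  by (intro bounded_linear_sub bounded_bilinear.bounded_linear_right[OF bounded_bilinear_matrix_matrix_mult]
      bounded_bilinear.bounded_linear_left[OF bounded_bilinear_matrix_matrix_mult])

lemma bounded_linear_vder_Suc_eq:
  assumes "bounded_linear K" "open J" "Cinf_on \<gamma> J" "s \<in> J"
    and "\<And>x. x \<in> J \<Longrightarrow> K (vder n \<gamma> x) = P x" "(P has_vector_derivative Q) (at s)"
  shows "K (vder (Suc n) \<gamma> s) = Q"
  using has_vector_derivative_unique_on_open[OF assms(2,4,5)
      bounded_linear.has_vector_derivative[OF assms(1) has_vector_derivative_vder[OF assms(3,4)]]
      assms(6)] .

locale null_curve_Killing =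
  fixes \<gamma> :: "real \<Rightarrow> mat2" and J :: "real set" and a b :: mat2 and l :: real
  assumes null_curve: "null_curve \<gamma> J"
    and Killing_eq: "\<And>s. s \<in> J \<Longrightarrow>
      a ** \<gamma> s - \<gamma> s ** b = 2 *\<^sub>R vder 3 \<gamma> s - (6 * bending \<gamma> s + 2 * l) *\<^sub>R vder 1 \<gamma> s"
begin

lemma open_J: "open J" and Cinf_on_\<gamma>: "Cinf_on \<gamma> J"
  using null_curve unfolding null_curve_def by auto

lemma has_vector_derivative_vder_\<gamma>:
  "s \<in> J \<Longrightarrow> (vder n \<gamma> has_vector_derivative vder (Suc n) \<gamma> s) (at s)"
  by (rule has_vector_derivative_vder[OF Cinf_on_\<gamma>])

lemma Killing_vder_Suc:
  assumes "s \<in> J" "\<And>x. x \<in> J \<Longrightarrow> a ** vder n \<gamma> x - vder n \<gamma> x ** b = P x"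
    and "(P has_vector_derivative Q) (at s)"
  shows "a ** vder (Suc n) \<gamma> s - vder (Suc n) \<gamma> s ** b = Q"
  using bounded_linear_vder_Suc_eq[OF bounded_linear_Killing open_J Cinf_on_\<gamma> assms] by simp

lemma Killing_vder1:
  assumes s: "s \<in> J"
  shows "a ** vder 1 \<gamma> s - vder 1 \<gamma> s ** b = (-8) *\<^sub>R \<gamma> s
    + (- 2 * deriv (bending \<gamma>) s) *\<^sub>R vder 1 \<gamma> s + (2 * bending \<gamma> s - 2 * l) *\<^sub>R vder 2 \<gamma> s"
proof -
  note dk = has_real_derivative_higher_deriv_bending[OF null_curve s]
  have "((\<lambda>x. 2 *\<^sub>R vder 3 \<gamma> x - (6 * bending \<gamma> x + 2 * l) *\<^sub>R vder 1 \<gamma> x) has_vector_derivative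
      2 *\<^sub>R vder 4 \<gamma> s - ((6 * bending \<gamma> s + 2 * l) *\<^sub>R vder 2 \<gamma> s
        + (6 * deriv (bending \<gamma>) s) *\<^sub>R vder 1 \<gamma> s)) (at s)"
    using has_vector_derivative_vder_\<gamma>[OF s, of 3] has_vector_derivative_vder_\<gamma>[OF s, of 1] dk(1)
    by (auto intro!: derivative_eq_intros simp: eval_nat_numeral)
  from Killing_vder_Suc[where n = 0, OF s _ this] Killing_eq show ?thesis
    by (simp add: null_curve_vder4[OF null_curve s] vec_eq_iff forall_2 algebra_simps)
qed

lemma Killing_vder2:
  assumes s: "s \<in> J"
  shows "a ** vder 2 \<gamma> s - vder 2 \<gamma> s ** b =
    (-8 - 2 * deriv (deriv (bending \<gamma>)) s) *\<^sub>R vder 1 \<gamma> s + (2 * bending \<gamma> s - 2 * l) *\<^sub>R vder 3 \<gamma> s"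
proof -
  note dk = has_real_derivative_higher_deriv_bending[OF null_curve s]
  have "((\<lambda>x. (-8) *\<^sub>R \<gamma> x + (- 2 * deriv (bending \<gamma>) x) *\<^sub>R vder 1 \<gamma> x
      + (2 * bending \<gamma> x - 2 * l) *\<^sub>R vder 2 \<gamma> x) has_vector_derivative
      (-8 - 2 * deriv (deriv (bending \<gamma>)) s) *\<^sub>R vder 1 \<gamma> s
      + (2 * bending \<gamma> s - 2 * l) *\<^sub>R vder 3 \<gamma> s) (at s)"
    using has_vector_derivative_vder_\<gamma>[OF s, of 0] has_vector_derivative_vder_\<gamma>[OF s, of 1]
      has_vector_derivative_vder_\<gamma>[OF s, of 2] dk(1,2)
    by (auto intro!: derivative_eq_intros simp: eval_nat_numeral vec_eq_iff forall_2 algebra_simps)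
  from Killing_vder_Suc[where n = 1, OF s _ this] Killing_vder1 show ?thesis
    by (simp add: numeral_2_eq_2)
qed

lemma Killing_vder3:
  assumes s: "s \<in> J"
  shows "a ** vder 3 \<gamma> s - vder 3 \<gamma> s ** b =
    (- 2 * (deriv ^^ 3) (bending \<gamma>) s) *\<^sub>R vder 1 \<gamma> s
    + (-8 - 2 * deriv (deriv (bending \<gamma>)) s) *\<^sub>R vder 2 \<gamma> s
    + (2 * deriv (bending \<gamma>) s) *\<^sub>R vder 3 \<gamma> s + (2 * bending \<gamma> s - 2 * l) *\<^sub>R vder 4 \<gamma> s"
proof -
  note dk = has_real_derivative_higher_deriv_bending[OF null_curve s]
  have "((\<lambda>x. (-8 - 2 * deriv (deriv (bending \<gamma>)) x) *\<^sub>R vder 1 \<gamma> x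
      + (2 * bending \<gamma> x - 2 * l) *\<^sub>R vder 3 \<gamma> x) has_vector_derivative
      (- 2 * (deriv ^^ 3) (bending \<gamma>) s) *\<^sub>R vder 1 \<gamma> s
      + (-8 - 2 * deriv (deriv (bending \<gamma>)) s) *\<^sub>R vder 2 \<gamma> s
      + (2 * deriv (bending \<gamma>) s) *\<^sub>R vder 3 \<gamma> s + (2 * bending \<gamma> s - 2 * l) *\<^sub>R vder 4 \<gamma> s) (at s)"
    using has_vector_derivative_vder_\<gamma>[OF s, of 1] has_vector_derivative_vder_\<gamma>[OF s, of 3] dk(1,3)
    by (auto intro!: derivative_eq_intros simp: eval_nat_numeral vec_eq_iff forall_2 algebra_simps)
  from Killing_vder_Suc[where n = 2, OF s _ this] Killing_vder2 show ?thesis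
    by (simp add: numeral_3_eq_3 numeral_2_eq_2)
qed

lemma bending_ODE:
  assumes "trace a = 0" "trace b = 0" and s: "s \<in> J"
  shows "(deriv ^^ 3) (bending \<gamma>) s + 2 * l * deriv (bending \<gamma>) s
    - 6 * bending \<gamma> s * deriv (bending \<gamma>) s = 0"
proof -
  interpret ip: bounded_bilinear ads_ip by (rule bounded_bilinear_ads_ip)
  note g = null_curve_gram[OF null_curve s]
  have dk: "deriv (bending \<gamma>) s = - (1/8) * ads_ip (vder 3 \<gamma> s) (vder 4 \<gamma> s)"
    using DERIV_imp_deriv[OF has_real_derivative_bending[OF null_curve s]] .
  have k: "bending \<gamma> s = - (1/16) * ads_ip (vder 3 \<gamma> s) (vder 3 \<gamma> s)"
    unfolding bending_def ..
  have "ads_ip (a ** vder 3 \<gamma> s - vder 3 \<gamma> s ** b) (vder 3 \<gamma> s) = 0"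
    using ads_ip_Killing_self assms(1,2) .
  then have "-2 * (deriv ^^ 3) (bending \<gamma>) s * ads_ip (vder 1 \<gamma> s) (vder 3 \<gamma> s)
      + (-8 - 2 * deriv (deriv (bending \<gamma>)) s) * ads_ip (vder 2 \<gamma> s) (vder 3 \<gamma> s)
      + 2 * deriv (bending \<gamma>) s * ads_ip (vder 3 \<gamma> s) (vder 3 \<gamma> s)
      + (2 * bending \<gamma> s - 2 * l) * ads_ip (vder 3 \<gamma> s) (vder 4 \<gamma> s) = 0"
    unfolding Killing_vder3[OF s] ip.add_left ip.scaleR_left
    by (simp add: ads_ip_commute[of "vder 4 \<gamma> s" "vder 3 \<gamma> s"])
  then show ?thesis using g(7,9) unfolding dk k by (simp add: algebra_simps)
qed

end

lemma matrix_inv_det_nz: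
  fixes M :: "real^'n^'n"
  assumes "det M \<noteq> 0"
  shows "matrix_inv M ** M = mat 1" "M ** matrix_inv M = mat 1"
proof -
  have "\<exists>M'. M ** M' = mat 1 \<and> M' ** M = mat 1"
    using assms invertible_det_nz unfolding invertible_def by blast
  then show "matrix_inv M ** M = mat 1" "M ** matrix_inv M = mat 1"
    unfolding matrix_inv_def by (metis (mono_tags, lifting) someI_ex)+
qed

lemma det_matrix_inv_eq_1:
  fixes M :: "real^'n^'n"
  assumes "det M = 1"
  shows "det (matrix_inv M) = 1"
  using arg_cong[OF matrix_inv_det_nz(1), of M det] assms by (simp add: det_mul det_I)

lemma matrix_inv_mat_1: "matrix_inv (mat 1 :: real^'n^'n) = mat 1"
  using matrix_inv_det_nz(1)[of "mat 1"] by (simp add: det_I)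

lemma trace_eq_0_if_tangent_SL2:
  fixes A :: "real \<Rightarrow> mat2"
  assumes "open I" "0 \<in> I" "(A has_vector_derivative a) (at 0)"
    and "\<And>t. t \<in> I \<Longrightarrow> det (A t) = 1" "A 0 = mat 1"
  shows "trace a = 0"
proof -
  have "((\<lambda>t. A t $ i $ j) has_real_derivative a $ i $ j) (at 0)" for i j
  proof -
    have "bounded_linear (\<lambda>X :: mat2. X $ i $ j)"
      using bounded_linear_compose[OF bounded_linear_vec_nth[of j] bounded_linear_vec_nth[of i]]
      by (simp add: o_def)
    from bounded_linear.has_vector_derivative[OF this assms(3)] show ?thesis
      unfolding has_real_derivative_iff_has_vector_derivative .
  qed
  then have "((\<lambda>t. det (A t)) has_real_derivative a$1$1 + a$2$2) (at 0)"
    unfolding det_2 using assms(5) by (auto intro!: derivative_eq_intros simp: mat_def)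
  then show ?thesis
    using has_real_derivative_const_on_open_eq_0[OF assms(1,2) assms(4)] by (simp add: trace_2)
qed

lemma LIEN_velocity_eq:
  "(- 2 * sqrt 2) *\<^sub>R (bending \<gamma> s *\<^sub>R frameT \<gamma> s + 2 *\<^sub>R frameB \<gamma> s)
    = 2 *\<^sub>R vder 3 \<gamma> s - (6 * bending \<gamma> s) *\<^sub>R vder 1 \<gamma> s"
  unfolding frameT_def frameB_def by (simp add: vec_eq_iff forall_2 field_simps)

text \<open>Differentiate G(s,t) B(t) = A(t) \<gamma>(s + 2 l t) at t = 0, where G_t = V is the LIEN
  velocity of G(-,0) = \<gamma>.\<close>
lemma stationary_LIEN_Killing:
  assumes nc: "null_curve \<gamma> J" and st: "stationary_LIEN \<gamma> J l A B I"
  shows "null_curve_Killing \<gamma> J (vder 1 A 0) (vder 1 B 0) l"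
    and "trace (vder 1 A 0) = 0" "trace (vder 1 B 0) = 0"
proof -
  have oI: "open I" and I0: "0 \<in> I" and cA: "Cinf_on A I" and cB: "Cinf_on B I"
    and dets: "\<And>t. t \<in> I \<Longrightarrow> det (A t) = 1 \<and> det (B t) = 1"
    and A0: "A 0 = mat 1" and B0: "B 0 = mat 1"
    and lf: "lien_flow (stat_evol \<gamma> l A B) (evol_dom J l I)"
    using st unfolding stationary_LIEN_def by auto
  define a where "a = vder 1 A 0"
  define b where "b = vder 1 B 0"
  have hA: "(A has_vector_derivative a) (at 0)"
    using has_vector_derivative_vder[OF cA I0, of 0] unfolding a_def by simp
  have hB: "(B has_vector_derivative b) (at 0)"
    using has_vector_derivative_vder[OF cB I0, of 0] unfolding b_def by simp
  show "trace (vder 1 A 0) = 0" "trace (vder 1 B 0) = 0"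
    using trace_eq_0_if_tangent_SL2[OF oI I0 hA _ A0] trace_eq_0_if_tangent_SL2[OF oI I0 hB _ B0] dets
    unfolding a_def b_def by blast+
  define G where "G = stat_evol \<gamma> l A B"
  have G0: "(\<lambda>\<sigma>. G \<sigma> 0) = \<gamma>" unfolding G_def stat_evol_def A0 B0 matrix_inv_mat_1 by simp
  have "a ** \<gamma> s - \<gamma> s ** b = 2 *\<^sub>R vder 3 \<gamma> s - (6 * bending \<gamma> s + 2 * l) *\<^sub>R vder 1 \<gamma> s"
    if s: "s \<in> J" for s
  proof -
    let ?V = "2 *\<^sub>R vder 3 \<gamma> s - (6 * bending \<gamma> s) *\<^sub>R vder 1 \<gamma> s"
    have "(s, 0) \<in> evol_dom J l I" using s I0 unfolding evol_dom_def by simp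
    with lf have "((\<lambda>\<tau>. G s \<tau>) has_vector_derivative 2 *\<^sub>R vder 3 (\<lambda>\<sigma>. G \<sigma> 0) s
        - (6 * bending (\<lambda>\<sigma>. G \<sigma> 0) s) *\<^sub>R vder 1 (\<lambda>\<sigma>. G \<sigma> 0) s) (at 0)"
      unfolding lien_flow_def G_def[symmetric] LIEN_velocity_eq by fastforce
    then have "((\<lambda>\<tau>. G s \<tau>) has_vector_derivative ?V) (at 0)" unfolding G0 .
    from bounded_bilinear.has_vector_derivative[OF bounded_bilinear_matrix_matrix_mult this hB]
    have L: "((\<lambda>\<tau>. G s \<tau> ** B \<tau>) has_vector_derivative \<gamma> s ** b + ?V) (at 0)"
      using fun_cong[OF G0, of s] B0 by simp
    have "((\<lambda>\<tau>. s + 2 * l * \<tau>) has_vector_derivative 2 * l) (at 0)"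
      unfolding has_real_derivative_iff_has_vector_derivative[symmetric]
      by (auto intro!: derivative_eq_intros)
    moreover have "(\<gamma> has_vector_derivative vder 1 \<gamma> s) (at (s + 2 * l * 0))"
      using has_vector_derivative_vder[OF _ s, of \<gamma> 0] nc unfolding null_curve_def by simp
    ultimately have "((\<lambda>\<tau>. \<gamma> (s + 2 * l * \<tau>)) has_vector_derivative (2 * l) *\<^sub>R vder 1 \<gamma> s) (at 0)"
      using vector_diff_chain_at by (force simp: o_def)
    from bounded_bilinear.has_vector_derivative[OF bounded_bilinear_matrix_matrix_mult hA this]
    have R: "((\<lambda>\<tau>. A \<tau> ** \<gamma> (s + 2 * l * \<tau>)) has_vector_derivative
        (2 * l) *\<^sub>R vder 1 \<gamma> s + a ** \<gamma> s) (at 0)"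
      using A0 by simp
    have "G s \<tau> ** B \<tau> = A \<tau> ** \<gamma> (s + 2 * l * \<tau>)" if "\<tau> \<in> I" for \<tau>
      using matrix_inv_det_nz(1)[of "B \<tau>"] dets[OF that]
      unfolding G_def stat_evol_def by (metis matrix_mul_assoc matrix_mul_rid zero_neq_one)
    from has_vector_derivative_unique_on_open[OF oI I0 this L R]
    show ?thesis by (simp add: vec_eq_iff forall_2 algebra_simps)
  qed
  with nc show "null_curve_Killing \<gamma> J (vder 1 A 0) (vder 1 B 0) l"
    unfolding a_def b_def by unfold_locales
qed

lemma vder_bounded_linear_shift:
  fixes \<gamma> :: "real \<Rightarrow> 'a::real_normed_vector" and L :: "'a \<Rightarrow> 'b::real_normed_vector"
  assumes L: "bounded_linear L" and oJ: "open J" and ci: "Cinf_on \<gamma> J"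
  shows "\<sigma> + c \<in> J \<Longrightarrow> vder n (\<lambda>\<sigma>. L (\<gamma> (\<sigma> + c))) \<sigma> = L (vder n \<gamma> (\<sigma> + c))"
proof (induction n arbitrary: \<sigma>)
  case 0
  then show ?case by simp
next
  case (Suc n)
  have oS: "open ((\<lambda>x. x + c) -` J)"
    by (rule continuous_open_vimage[OF oJ]) (intro continuous_intros)
  have "((\<lambda>x. x + c) has_vector_derivative 1) (at \<sigma>)"
    unfolding has_real_derivative_iff_has_vector_derivative[symmetric]
    by (auto intro!: derivative_eq_intros)
  from vector_diff_chain_at[OF this] has_vector_derivative_vder[OF ci Suc.prems, of n]
  have "((\<lambda>x. vder n \<gamma> (x + c)) has_vector_derivative vder (Suc n) \<gamma> (\<sigma> + c)) (at \<sigma>)"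
    by (simp add: o_def)
  from bounded_linear.has_vector_derivative[OF L this]
  have "(vder n (\<lambda>\<sigma>. L (\<gamma> (\<sigma> + c))) has_vector_derivative L (vder (Suc n) \<gamma> (\<sigma> + c))) (at \<sigma>)"
    using has_vector_derivative_transform_within_open[OF _ oS] Suc.IH Suc.prems by force
  then show ?case using vector_derivative_at by simp
qed

lemma bending_SL2_shift:
  fixes \<gamma> :: "real \<Rightarrow> mat2" and M1 M2 :: mat2
  assumes "null_curve \<gamma> J" "det M1 = 1" "det M2 = 1" "\<sigma> + c \<in> J"
  shows "bending (\<lambda>\<sigma>. M1 ** \<gamma> (\<sigma> + c) ** M2) \<sigma> = bending \<gamma> (\<sigma> + c)"
proof -
  have "bounded_linear (\<lambda>X. M1 ** X ** M2)"
    using bounded_linear_compose[OF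
        bounded_bilinear.bounded_linear_left[OF bounded_bilinear_matrix_matrix_mult, of M2]
        bounded_bilinear.bounded_linear_right[OF bounded_bilinear_matrix_matrix_mult, of M1]]
    by (simp add: o_def)
  moreover have "open J" "Cinf_on \<gamma> J" using assms(1) unfolding null_curve_def by auto
  ultimately have "vder 3 (\<lambda>\<sigma>. M1 ** \<gamma> (\<sigma> + c) ** M2) \<sigma> = M1 ** vder 3 \<gamma> (\<sigma> + c) ** M2"
    using vder_bounded_linear_shift[of "\<lambda>X. M1 ** X ** M2", OF _ _ _ assms(4)] by blast
  then show ?thesis unfolding bending_def ads_ip_self using assms(2,3) by (simp add: det_mul)
qed

lemma higher_deriv_shift:
  fixes f :: "real \<Rightarrow> real"
  shows "(deriv ^^ n) (\<lambda>\<sigma>. f (\<sigma> + c)) = (\<lambda>\<sigma>. (deriv ^^ n) f (\<sigma> + c))"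
proof (induction n)
  case (Suc n)
  have "deriv (\<lambda>\<sigma>. g (\<sigma> + c)) x = deriv g (x + c)" for g :: "real \<Rightarrow> real" and x
    by (simp add: deriv_def DERIV_shift)
  with Suc show ?case by simp
qed simp

theorem mainTheorem4:
  fixes \<gamma> A B :: "real \<Rightarrow> real^2^2" and J I :: "real set" and l :: real
  assumes "null_curve \<gamma> J"
    and "stationary_LIEN \<gamma> J l A B I"
  shows "(\<forall>s\<in>J. (deriv ^^ 3) (bending \<gamma>) s + 2 * l * deriv (bending \<gamma>) s
                 - 6 * bending \<gamma> s * deriv (bending \<gamma>) s = 0)
       \<and> (\<forall>(s, t)\<in>evol_dom J l I.
            bending (\<lambda>\<sigma>. stat_evol \<gamma> l A B \<sigma> t) s = bending \<gamma> (s + 2 * l * t))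
       \<and> (\<forall>(s, t)\<in>evol_dom J l I.
            deriv (\<lambda>\<tau>. bending \<gamma> (s + 2 * l * \<tau>)) t
            + (deriv ^^ 3) (\<lambda>\<sigma>. bending \<gamma> (\<sigma> + 2 * l * t)) s
            - 6 * bending \<gamma> (s + 2 * l * t) * deriv (\<lambda>\<sigma>. bending \<gamma> (\<sigma> + 2 * l * t)) s = 0)"
proof -
  interpret null_curve_Killing \<gamma> J "vder 1 A 0" "vder 1 B 0" l
    by (rule stationary_LIEN_Killing(1)[OF assms])
  have ODE: "(deriv ^^ 3) (bending \<gamma>) x + 2 * l * deriv (bending \<gamma>) x
      - 6 * bending \<gamma> x * deriv (bending \<gamma>) x = 0" if "x \<in> J" for x
    using bending_ODE[OF stationary_LIEN_Killing(2,3)[OF assms] that] .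
  have dets: "det (A t) = 1" "det (matrix_inv (B t)) = 1" if "t \<in> I" for t
    using assms(2) that det_matrix_inv_eq_1 unfolding stationary_LIEN_def by auto
  have "bending (\<lambda>\<sigma>. stat_evol \<gamma> l A B \<sigma> t) s = bending \<gamma> (s + 2 * l * t)"
    and "deriv (\<lambda>\<tau>. bending \<gamma> (s + 2 * l * \<tau>)) t
      + (deriv ^^ 3) (\<lambda>\<sigma>. bending \<gamma> (\<sigma> + 2 * l * t)) s
      - 6 * bending \<gamma> (s + 2 * l * t) * deriv (\<lambda>\<sigma>. bending \<gamma> (\<sigma> + 2 * l * t)) s = 0"
    if "(s, t) \<in> evol_dom J l I" for s t
  proof -
    have t: "t \<in> I" and x: "s + 2 * l * t \<in> J" using that unfolding evol_dom_def by auto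
    show "bending (\<lambda>\<sigma>. stat_evol \<gamma> l A B \<sigma> t) s = bending \<gamma> (s + 2 * l * t)"
      unfolding stat_evol_def using bending_SL2_shift[OF assms(1) dets[OF t] x] .
    have "((\<lambda>\<tau>. s + 2 * l * \<tau>) has_real_derivative 2 * l) (at t)"
      by (auto intro!: derivative_eq_intros)
    from DERIV_chain2[OF has_real_derivative_higher_deriv_bending(1)[OF assms(1) x] this]
    have "deriv (\<lambda>\<tau>. bending \<gamma> (s + 2 * l * \<tau>)) t = deriv (bending \<gamma>) (s + 2 * l * t) * (2 * l)"
      by (rule DERIV_imp_deriv)
    then show "deriv (\<lambda>\<tau>. bending \<gamma> (s + 2 * l * \<tau>)) t
      + (deriv ^^ 3) (\<lambda>\<sigma>. bending \<gamma> (\<sigma> + 2 * l * t)) s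
      - 6 * bending \<gamma> (s + 2 * l * t) * deriv (\<lambda>\<sigma>. bending \<gamma> (\<sigma> + 2 * l * t)) s = 0"
      using ODE[OF x] higher_deriv_shift[of 1 "bending \<gamma>" "2 * l * t"]
        higher_deriv_shift[of 3 "bending \<gamma>" "2 * l * t"]
      by (simp add: algebra_simps)
  qed
  with ODE show ?thesis by blast
qed

end
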